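(* Let $G$ be a compact group and $\alpha$ an automorphism of $G$ such that $(G,\alpha)$ is topologically transitive and has finite depth. Let $V$ be an open normal subgroup of $G$ with $\bigcap_{k\in\mathbb{Z}}\alpha^k(V)=\{1\}$ and $V=V_+V_-$. Then (1) there is $k\in\mathbb{N}$ such that $\alpha^k(V_+)V_-=G$; and (2) $\bigcup_{n\in\mathbb{N}}\big(\alpha^n(V_+)\cap\alpha^{-n}(V_-)\big)$ is dense in $G$.
   Context: $V_+=\bigcap_{k\ge0}\alpha^k(V)$, $V_-=\bigcap_{k\ge0}\alpha^{-k}(V)$. $(G,\alpha)$ is topologically transitive if some orbit $\{\alpha^n(x):n\in\mathbb{Z}\}$ is dense in $G$; it has finite depth if there is an open subgroup $U\le G$ with $\bigcap_{k\in\mathbb{Z}}\alpha^k(U)=\{1\}$. *)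

theory Defs
  imports "HOL-Analysis.Analysis"
begin

text \<open>Groups are written additively via the class group_add, which does NOT assume
commutativity; so 'a :: group_add is an arbitrary (possibly non-abelian) group with
identity 0, product +, inverse uminus.\<close>

definition topological_group :: "'a::{group_add,topological_space} itself \<Rightarrow> bool" where
  "topological_group _ \<longleftrightarrow>
     continuous_on UNIV (\<lambda>p::'a \<times> 'a. fst p + snd p) \<and> continuous_on UNIV (uminus :: 'a \<Rightarrow> 'a)"

definition is_subgroup :: "'a::group_add set \<Rightarrow> bool" where
  "is_subgroup H \<longleftrightarrow> 0 \<in> H \<and> (\<forall>x\<in>H. \<forall>y\<in>H. x + y \<in> H) \<and> (\<forall>x\<in>H. - x \<in> H)"

definition is_normal_subgroup :: "'a::group_add set \<Rightarrow> bool" where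
  "is_normal_subgroup H \<longleftrightarrow> is_subgroup H \<and> (\<forall>g x. x \<in> H \<longrightarrow> g + x - g \<in> H)"

definition top_automorphism :: "('a::{group_add,topological_space} \<Rightarrow> 'a) \<Rightarrow> bool" where
  "top_automorphism \<alpha> \<longleftrightarrow> bij \<alpha> \<and> (\<forall>x y. \<alpha> (x + y) = \<alpha> x + \<alpha> y)
     \<and> continuous_on UNIV \<alpha> \<and> continuous_on UNIV (inv \<alpha>)"

definition apow :: "('a \<Rightarrow> 'a) \<Rightarrow> int \<Rightarrow> 'a \<Rightarrow> 'a" where
  "apow \<alpha> k = (if 0 \<le> k then \<alpha> ^^ nat k else inv \<alpha> ^^ nat (- k))"

definition top_transitive :: "('a::{group_add,topological_space} \<Rightarrow> 'a) \<Rightarrow> bool" where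
  "top_transitive \<alpha> \<longleftrightarrow> (\<exists>x. closure {apow \<alpha> n x | n. True} = UNIV)"

definition finite_depth :: "('a::{group_add,topological_space} \<Rightarrow> 'a) \<Rightarrow> bool" where
  "finite_depth \<alpha> \<longleftrightarrow> (\<exists>U. open U \<and> is_subgroup U \<and> (\<Inter>k. apow \<alpha> k ` U) = {0})"

definition Vplus :: "('a \<Rightarrow> 'a) \<Rightarrow> 'a set \<Rightarrow> 'a set" where
  "Vplus \<alpha> V = (\<Inter>k::nat. (\<alpha> ^^ k) ` V)"

definition Vminus :: "('a \<Rightarrow> 'a) \<Rightarrow> 'a set \<Rightarrow> 'a set" where
  "Vminus \<alpha> V = (\<Inter>k::nat. (inv \<alpha> ^^ k) ` V)"

definition setprod :: "'a::group_add set \<Rightarrow> 'a set \<Rightarrow> 'a set" where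
  "setprod A B = {a + b | a b. a \<in> A \<and> b \<in> B}"

end

theory Submission
  imports Defs
begin

(* The subgroups \<alpha>^n(V_+) \<alpha>^-n(V_-) contain V = V_+ V_-, hence are open, and they increase
   with n. Their union is an open, hence closed, \<alpha>-invariant subgroup, so topological
   transitivity forces it to be G, and compactness forces one of them to be G already; applying
   \<alpha>^n gives (1). Shifting (1) gives \<alpha>^(k+t)(V_+) \<alpha>^t(V_-) = G for every t. Factor g at
   the shift t = m and then its V_+-part at the shift t = -(k+m): the V_- factor c obtained lies in
   \<alpha>^(k+m)(V_+) \<inter> \<alpha>^-(k+m)(V_-), and g^-1 c lies in the intersection of the \<alpha>^i(V)
   with |i| <= m. These closed normal subgroups shrink to {1}, so by compactness they form a
   neighbourhood basis of 1, which gives (2). *)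

section \<open>Integer powers of a bijection\<close>

lemma apow_of_nat [simp]: "apow \<alpha> (int n) = \<alpha> ^^ n"
  by (simp add: apow_def)

lemma apow_minus_of_nat [simp]: "apow \<alpha> (- int n) = inv \<alpha> ^^ n"
  by (cases n) (simp_all add: apow_def nat_add_distrib)

lemma apow_plus_1:
  assumes "bij \<alpha>" shows "apow \<alpha> (k + 1) x = \<alpha> (apow \<alpha> k x)"
proof (cases k rule: int_cases)
  case (nonneg n)
  then show ?thesis by (simp add: apow_def nat_add_distrib)
next
  case (neg n)
  then have "k + 1 = - int n" by simp
  then have "apow \<alpha> (k + 1) x = (inv \<alpha> ^^ n) x" by simp
  moreover have "apow \<alpha> k x = inv \<alpha> ((inv \<alpha> ^^ n) x)"
    using neg by (simp only: apow_minus_of_nat funpow.simps o_apply)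
  ultimately show ?thesis
    using assms by (simp add: bij_is_surj surj_f_inv_f)
qed

lemma apow_add:
  assumes "bij \<alpha>" shows "apow \<alpha> (a + b) x = apow \<alpha> a (apow \<alpha> b x)"
proof (induction a rule: int_induct[where k = 0])
  case (step1 i)
  have "apow \<alpha> (i + 1 + b) x = apow \<alpha> ((i + b) + 1) x" by (simp add: ac_simps)
  then show ?case using step1 by (simp add: apow_plus_1[OF assms])
next
  case (step2 i)
  have "\<alpha> (apow \<alpha> (i - 1 + b) x) = apow \<alpha> (i + b) x"
    using apow_plus_1[OF assms, of "i - 1 + b"] by simp
  also have "\<dots> = \<alpha> (apow \<alpha> (i - 1) (apow \<alpha> b x))"
    using step2 apow_plus_1[OF assms, of "i - 1"] by simp
  finally show ?case
    using assms by (simp add: bij_is_inj inj_eq)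
qed (simp add: apow_def)

lemma apow_minus_cancel:
  assumes "bij \<alpha>" shows "apow \<alpha> (- k) (apow \<alpha> k x) = x" "apow \<alpha> k (apow \<alpha> (- k) x) = x"
  using apow_add[OF assms, of "- k" k x] apow_add[OF assms, of k "- k" x] by (simp_all add: apow_def)

lemma bij_apow: assumes "bij \<alpha>" shows "bij (apow \<alpha> k)"
  by (rule o_bij[of "apow \<alpha> (- k)"]) (auto simp: apow_minus_cancel[OF assms])

lemma apow_image_eq_vimage:
  assumes "bij \<alpha>" shows "apow \<alpha> k ` S = apow \<alpha> (- k) -` S"
  using apow_minus_cancel[OF assms] by (auto simp: image_iff) metis

lemma apow_image_apow_image:
  assumes "bij \<alpha>" shows "apow \<alpha> a ` apow \<alpha> b ` S = apow \<alpha> (a + b) ` S"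
  by (simp add: image_image apow_add[OF assms])

lemma continuous_on_funpow:
  fixes f :: "'a::topological_space \<Rightarrow> 'a"
  assumes "continuous_on UNIV f" shows "continuous_on UNIV (f ^^ n)"
proof (induction n)
  case (Suc n)
  have "f ^^ Suc n = f \<circ> (f ^^ n)" by simp
  then show ?case
    using continuous_on_compose[OF Suc continuous_on_subset[OF assms subset_UNIV]] by simp
qed (simp add: id_def)

lemma continuous_on_apow:
  assumes "continuous_on UNIV \<alpha>" "continuous_on UNIV (inv \<alpha>)" shows "continuous_on UNIV (apow \<alpha> k)"
  using continuous_on_funpow[OF assms(1)] continuous_on_funpow[OF assms(2)] by (simp add: apow_def)

section \<open>Additive maps\<close>

lemma funpow_additive:
  fixes f :: "'a::group_add \<Rightarrow> 'a"
  assumes "\<And>x y. f (x + y) = f x + f y" shows "(f ^^ n) (x + y) = (f ^^ n) x + (f ^^ n) y"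
  by (induction n) (simp_all add: assms)

lemma inv_additive:
  fixes f :: "'a::group_add \<Rightarrow> 'b::group_add"
  assumes "bij f" "\<And>x y. f (x + y) = f x + f y" shows "inv f (x + y) = inv f x + inv f y"
proof -
  have "f (inv f x + inv f y) = x + y"
    using assms by (simp add: bij_is_surj surj_f_inv_f)
  then show ?thesis
    using assms(1) by (metis bij_is_inj inv_f_f)
qed

lemma additive_zero:
  fixes f :: "'a::group_add \<Rightarrow> 'b::group_add"
  assumes "\<And>x y. f (x + y) = f x + f y" shows "f 0 = 0"
  using assms[of 0 0] add_left_cancel[of "f 0" "f 0" 0] by simp

lemma additive_uminus:
  fixes f :: "'a::group_add \<Rightarrow> 'b::group_add"
  assumes "\<And>x y. f (x + y) = f x + f y" shows "f (- x) = - f x"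
  using assms[of "- x" x] additive_zero[OF assms] by (simp add: eq_neg_iff_add_eq_0)

lemma apow_additive:
  fixes \<alpha> :: "'a::group_add \<Rightarrow> 'a"
  assumes "bij \<alpha>" "\<And>x y. \<alpha> (x + y) = \<alpha> x + \<alpha> y"
  shows "apow \<alpha> k (x + y) = apow \<alpha> k x + apow \<alpha> k y"
proof -
  have "\<And>x y. inv \<alpha> (x + y) = inv \<alpha> x + inv \<alpha> y"
    by (rule inv_additive[of \<alpha>, OF assms])
  then show ?thesis
    using funpow_additive[of \<alpha>, OF assms(2)] funpow_additive[of "inv \<alpha>"]
    by (cases "0 \<le> k") (simp_all add: apow_def)
qed

section \<open>Subgroups and products of subsets\<close>

lemma subgroup_zero: "is_subgroup H \<Longrightarrow> 0 \<in> H"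
  and subgroup_add: "is_subgroup H \<Longrightarrow> x \<in> H \<Longrightarrow> y \<in> H \<Longrightarrow> x + y \<in> H"
  and subgroup_uminus: "is_subgroup H \<Longrightarrow> x \<in> H \<Longrightarrow> - x \<in> H"
  by (simp_all add: is_subgroup_def)

lemma normal_subgroup_is_subgroup: "is_normal_subgroup H \<Longrightarrow> is_subgroup H"
  and normal_subgroup_conj: "is_normal_subgroup H \<Longrightarrow> x \<in> H \<Longrightarrow> g + x - g \<in> H"
  by (simp_all add: is_normal_subgroup_def)

lemma is_normal_subgroup_vimage:
  fixes f :: "'a::group_add \<Rightarrow> 'b::group_add"
  assumes "\<And>x y. f (x + y) = f x + f y" "is_normal_subgroup H"
  shows "is_normal_subgroup (f -` H)"
proof -
  have "f (x - y) = f x - f y" for x y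
    using assms(1)[of x "- y"] additive_uminus[OF assms(1)] by simp
  then show ?thesis
    using assms additive_zero[OF assms(1)] additive_uminus[OF assms(1)]
    by (simp add: is_normal_subgroup_def is_subgroup_def)
qed

lemma is_normal_subgroup_INT:
  "(\<And>i. i \<in> I \<Longrightarrow> is_normal_subgroup (H i)) \<Longrightarrow> is_normal_subgroup (\<Inter>i\<in>I. H i)"
  by (simp add: is_normal_subgroup_def is_subgroup_def)

lemma is_subgroup_UN_mono:
  fixes H :: "nat \<Rightarrow> 'a::group_add set"
  assumes "mono H" "\<And>n. is_subgroup (H n)"
  shows "is_subgroup (\<Union>n. H n)"
  unfolding is_subgroup_def
proof (intro conjI ballI)
  show "0 \<in> (\<Union>n. H n)" using subgroup_zero[OF assms(2)] by blast
next
  fix x y assume "x \<in> (\<Union>n. H n)" "y \<in> (\<Union>n. H n)"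
  then obtain m n where "x \<in> H m" "y \<in> H n" by blast
  then have "x \<in> H (max m n)" "y \<in> H (max m n)"
    using monoD[OF assms(1)] by (meson max.cobounded1 max.cobounded2 subsetD)+
  then show "x + y \<in> (\<Union>n. H n)" using subgroup_add[OF assms(2)] by blast
next
  fix x assume "x \<in> (\<Union>n. H n)"
  then show "- x \<in> (\<Union>n. H n)" using subgroup_uminus[OF assms(2)] by blast
qed

lemma setprodI: "a \<in> A \<Longrightarrow> b \<in> B \<Longrightarrow> a + b \<in> setprod A B"
  unfolding setprod_def by blast

lemma setprodE:
  assumes "x \<in> setprod A B" obtains a b where "x = a + b" "a \<in> A" "b \<in> B"
  using assms unfolding setprod_def by blast

lemma setprod_mono: "A \<subseteq> A' \<Longrightarrow> B \<subseteq> B' \<Longrightarrow> setprod A B \<subseteq> setprod A' B'"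
  unfolding setprod_def by blast

lemma image_setprod:
  assumes "\<And>x y. f (x + y) = f x + f y"
  shows "f ` setprod A B = setprod (f ` A) (f ` B)"
proof
  show "f ` setprod A B \<subseteq> setprod (f ` A) (f ` B)"
    by (auto simp: assms intro!: setprodI elim!: setprodE)
  show "setprod (f ` A) (f ` B) \<subseteq> f ` setprod A B"
  proof
    fix z assume "z \<in> setprod (f ` A) (f ` B)"
    then obtain a b where "z = f a + f b" "a \<in> A" "b \<in> B" by (auto elim!: setprodE)
    then have "z = f (a + b)" by (simp add: assms)
    then show "z \<in> f ` setprod A B" using setprodI[OF \<open>a \<in> A\<close> \<open>b \<in> B\<close>] by blast
  qed
qed

lemma is_subgroup_setprod:
  fixes H K :: "'a::group_add set"
  assumes H: "is_subgroup H" and K: "is_normal_subgroup K"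
  shows "is_subgroup (setprod H K)"
proof -
  have K': "is_subgroup K"
    by (rule normal_subgroup_is_subgroup[OF K])
  show ?thesis
    unfolding is_subgroup_def
  proof (intro conjI ballI)
    show "0 \<in> setprod H K"
      using setprodI[OF subgroup_zero[OF H] subgroup_zero[OF K']] by simp
  next
    fix x y assume "x \<in> setprod H K" "y \<in> setprod H K"
    obtain a b where ab: "x = a + b" "a \<in> H" "b \<in> K" using \<open>x \<in> setprod H K\<close> by (rule setprodE)
    obtain c d where cd: "y = c + d" "c \<in> H" "d \<in> K" using \<open>y \<in> setprod H K\<close> by (rule setprodE)
    have "x + y = (a + c) + ((- c + b - - c) + d)"
      by (simp add: ab(1) cd(1) add.assoc)
    moreover have "(- c + b - - c) + d \<in> K"
      by (rule subgroup_add[OF K' normal_subgroup_conj[OF K ab(3)] cd(3)])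
    ultimately show "x + y \<in> setprod H K"
      using setprodI[OF subgroup_add[OF H ab(2) cd(2)]] by simp
  next
    fix x assume "x \<in> setprod H K"
    then obtain a b where ab: "x = a + b" "a \<in> H" "b \<in> K" by (rule setprodE)
    have "- x = - a + (a + - b - a)"
      by (simp add: ab(1) add.assoc minus_add diff_conv_add_uminus del: add_uminus_conv_diff)
    then show "- x \<in> setprod H K"
      using setprodI[OF subgroup_uminus[OF H ab(2)] normal_subgroup_conj[OF K subgroup_uminus[OF K' ab(3)]]]
      by simp
  qed
qed

section \<open>Topological groups and compactness\<close>

lemma open_vimage_left_translation:
  fixes c :: "'a::{group_add,topological_space}"
  assumes "topological_group TYPE('a)" "open S"
  shows "open ((\<lambda>y. c + y) -` S)"
proof -
  have "continuous_on UNIV (\<lambda>p::'a \<times> 'a. fst p + snd p)"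
    using assms(1) by (simp add: topological_group_def)
  from continuous_on_compose2[OF this continuous_on_Pair[OF continuous_on_const continuous_on_id]]
  have "continuous_on UNIV (\<lambda>y. c + y)"
    by simp
  then show ?thesis
    using assms(2) by (simp add: open_vimage)
qed

lemma open_if_closed_under_right_translation:
  fixes H S :: "'a::{group_add,topological_space} set"
  assumes "topological_group TYPE('a)" "open H" "0 \<in> H" "\<And>s h. s \<in> S \<Longrightarrow> h \<in> H \<Longrightarrow> s + h \<in> S"
  shows "open S"
proof -
  have "S = (\<Union>s\<in>S. (\<lambda>y. - s + y) -` H)"
  proof (intro equalityI subsetI)
    fix x assume "x \<in> S"
    then show "x \<in> (\<Union>s\<in>S. (\<lambda>y. - s + y) -` H)" using assms(3) by force
  next
    fix y assume "y \<in> (\<Union>s\<in>S. (\<lambda>y. - s + y) -` H)"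
    then obtain s where "s \<in> S" "- s + y \<in> H" by blast
    then show "y \<in> S" using assms(4)[of s "- s + y"] by (simp add: add.assoc[symmetric])
  qed
  also have "open \<dots>"
    by (intro open_UN ballI open_vimage_left_translation[OF assms(1,2)])
  finally show ?thesis .
qed

lemma open_subgroup_closed:
  fixes H :: "'a::{group_add,topological_space} set"
  assumes "topological_group TYPE('a)" "open H" "is_subgroup H"
  shows "closed H"
  unfolding closed_def
proof (rule open_if_closed_under_right_translation[OF assms(1,2) subgroup_zero[OF assms(3)]])
  fix s h assume "s \<in> - H" "h \<in> H"
  then show "s + h \<in> - H"
    using subgroup_add[OF assms(3) _ subgroup_uminus[OF assms(3)], of "s + h" h] by (auto simp: add.assoc)
qed

lemma subgroup_open_if_contains_open:
  fixes H S :: "'a::{group_add,topological_space} set"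
  assumes "topological_group TYPE('a)" "open H" "is_subgroup H" "is_subgroup S" "H \<subseteq> S"
  shows "open S"
  using assms subgroup_add[OF assms(4)]
  by (intro open_if_closed_under_right_translation[OF assms(1,2) subgroup_zero[OF assms(3)]]) blast

lemma compact_UNIV_mono_open_cover:
  fixes T :: "nat \<Rightarrow> 'a::topological_space set"
  assumes "compact (UNIV :: 'a set)" "mono T" "\<And>n. open (T n)" "(\<Union>n. T n) = UNIV"
  obtains n where "T n = UNIV"
proof -
  obtain N where "finite N" "UNIV \<subseteq> (\<Union>n\<in>N. T n)"
    using compactE_image[OF assms(1), of UNIV T] assms(3,4) by auto
  moreover have "T n \<subseteq> T (Max (insert 0 N))" if "n \<in> N" for n
    using that \<open>finite N\<close> by (intro monoD[OF assms(2)]) simp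
  ultimately show ?thesis
    using that by blast
qed

lemma compact_UNIV_finite_Inter_subset:
  fixes C :: "'i \<Rightarrow> 'a::topological_space set"
  assumes "compact (UNIV :: 'a set)" "\<And>i. closed (C i)" "open W" "(\<Inter>i. C i) \<subseteq> W"
  obtains I where "finite I" "(\<Inter>i\<in>I. C i) \<subseteq> W"
proof -
  have "compact (- W)"
    using compact_Int_closed[OF assms(1) closed_Compl[OF assms(3)]] by simp
  moreover have "- W \<inter> (\<Inter>i. C i) = {}"
    using assms(4) by blast
  ultimately obtain I where "finite I" "- W \<inter> (\<Inter>i\<in>I. C i) = {}"
    using compact_imp_fip_image[of "- W" UNIV C] assms(2) by blast
  then show ?thesis
    using that by blast
qed

lemma top_transitive_invariant_clopen_eq_UNIV:
  assumes "top_transitive \<alpha>" "bij \<alpha>" "open H" "closed H" "H \<noteq> {}"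
    and "\<And>k x. x \<in> H \<Longrightarrow> apow \<alpha> k x \<in> H"
  shows "H = UNIV"
proof -
  obtain x where dense: "closure {apow \<alpha> n x | n. True} = UNIV"
    using assms(1) by (auto simp: top_transitive_def)
  then have "H \<inter> closure {apow \<alpha> n x | n. True} \<noteq> {}"
    using assms(5) by simp
  then obtain n where "apow \<alpha> n x \<in> H"
    using open_Int_closure_eq_empty[OF assms(3)] by blast
  have "apow \<alpha> m x \<in> H" for m
  proof -
    have "apow \<alpha> m x = apow \<alpha> (m - n) (apow \<alpha> n x)"
      using apow_add[OF assms(2), of "m - n" n x] by simp
    also have "\<dots> \<in> H"
      by (rule assms(6)[OF \<open>apow \<alpha> n x \<in> H\<close>])
    finally show ?thesis .
  qed
  then have "closure {apow \<alpha> n x | n. True} \<subseteq> H"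
    by (intro closure_minimal[OF _ assms(4)]) blast
  with dense show ?thesis
    by (simp add: top.extremum_unique)
qed

section \<open>The subgroups \<alpha>^j(V_+) and \<alpha>^j(V_-)\<close>

(* Vplus_at \<alpha> V j = \<alpha>^j(V_+) and Vminus_at \<alpha> V j = \<alpha>^j(V_-), see funpow_image_Vplus. *)
definition Vplus_at :: "('a \<Rightarrow> 'a) \<Rightarrow> 'a set \<Rightarrow> int \<Rightarrow> 'a set" where
  "Vplus_at \<alpha> V j = (\<Inter>i\<in>{j..}. apow \<alpha> i ` V)"

definition Vminus_at :: "('a \<Rightarrow> 'a) \<Rightarrow> 'a set \<Rightarrow> int \<Rightarrow> 'a set" where
  "Vminus_at \<alpha> V j = (\<Inter>i\<in>{..j}. apow \<alpha> i ` V)"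

lemma Vplus_at_mono: "j \<le> j' \<Longrightarrow> Vplus_at \<alpha> V j \<subseteq> Vplus_at \<alpha> V j'"
  unfolding Vplus_at_def by (intro INT_anti_mono) auto

lemma Vminus_at_antimono: "j' \<le> j \<Longrightarrow> Vminus_at \<alpha> V j \<subseteq> Vminus_at \<alpha> V j'"
  unfolding Vminus_at_def by (intro INT_anti_mono) auto

lemma apow_image_Vplus_at:
  assumes "bij \<alpha>" shows "apow \<alpha> t ` Vplus_at \<alpha> V j = Vplus_at \<alpha> V (t + j)"
proof -
  have "apow \<alpha> t ` Vplus_at \<alpha> V j = (\<Inter>i\<in>{j..}. apow \<alpha> (t + i) ` V)"
    by (simp add: Vplus_at_def bij_image_INT[OF bij_apow[OF assms]] apow_image_apow_image[OF assms])
  also have "\<dots> = (\<Inter>i\<in>(+) t ` {j..}. apow \<alpha> i ` V)"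
    by (simp only: image_image)
  finally show ?thesis
    by (simp add: Vplus_at_def image_add_atLeast)
qed

lemma apow_image_Vminus_at:
  assumes "bij \<alpha>" shows "apow \<alpha> t ` Vminus_at \<alpha> V j = Vminus_at \<alpha> V (t + j)"
proof -
  have "apow \<alpha> t ` Vminus_at \<alpha> V j = (\<Inter>i\<in>{..j}. apow \<alpha> (t + i) ` V)"
    by (simp add: Vminus_at_def bij_image_INT[OF bij_apow[OF assms]] apow_image_apow_image[OF assms])
  also have "\<dots> = (\<Inter>i\<in>(+) t ` {..j}. apow \<alpha> i ` V)"
    by (simp only: image_image)
  finally show ?thesis
    by (simp add: Vminus_at_def image_add_atMost)
qed

lemma Vplus_eq_Vplus_at_0: "Vplus \<alpha> V = Vplus_at \<alpha> V 0"
  unfolding Vplus_def Vplus_at_def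
  by (auto simp flip: apow_of_nat) (metis nonneg_int_cases)

lemma Vminus_eq_Vminus_at_0: "Vminus \<alpha> V = Vminus_at \<alpha> V 0"
  unfolding Vminus_def Vminus_at_def
  by (auto simp flip: apow_minus_of_nat) (metis minus_minus neg_0_le_iff_le nonneg_int_cases)

lemma funpow_image_Vplus:
  assumes "bij \<alpha>" shows "(\<alpha> ^^ n) ` Vplus \<alpha> V = Vplus_at \<alpha> V (int n)"
  using apow_image_Vplus_at[OF assms, of "int n" V 0] by (simp add: Vplus_eq_Vplus_at_0)

lemma inv_funpow_image_Vminus:
  assumes "bij \<alpha>" shows "(inv \<alpha> ^^ n) ` Vminus \<alpha> V = Vminus_at \<alpha> V (- int n)"
  using apow_image_Vminus_at[OF assms, of "- int n" V 0] by (simp add: Vminus_eq_Vminus_at_0)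

lemma is_normal_subgroup_apow_image:
  fixes \<alpha> :: "'a::group_add \<Rightarrow> 'a"
  assumes "bij \<alpha>" "\<And>x y. \<alpha> (x + y) = \<alpha> x + \<alpha> y" "is_normal_subgroup V"
  shows "is_normal_subgroup (apow \<alpha> k ` V)"
  unfolding apow_image_eq_vimage[OF assms(1)]
  by (rule is_normal_subgroup_vimage[OF _ assms(3)]) (rule apow_additive[of \<alpha>, OF assms(1,2)])

locale tidy_above_subgroup =
  fixes \<alpha> :: "'a::{group_add,topological_space} \<Rightarrow> 'a" and V :: "'a set"
  assumes topological_group: "topological_group TYPE('a)"
    and compact_UNIV: "compact (UNIV :: 'a set)"
    and automorphism: "top_automorphism \<alpha>"
    and transitive: "top_transitive \<alpha>"
    and open_V: "open V"
    and normal_V: "is_normal_subgroup V"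
    and Inter_apow_image_V: "(\<Inter>k. apow \<alpha> k ` V) = {0}"
    and tidy_above: "V = setprod (Vplus \<alpha> V) (Vminus \<alpha> V)"
begin

lemma bij: "bij \<alpha>"
  and additive: "\<alpha> (x + y) = \<alpha> x + \<alpha> y"
  and continuous: "continuous_on UNIV \<alpha>"
  and continuous_inv: "continuous_on UNIV (inv \<alpha>)"
  using automorphism by (simp_all add: top_automorphism_def)

lemma normal_apow_image_V: "is_normal_subgroup (apow \<alpha> k ` V)"
  by (rule is_normal_subgroup_apow_image[OF bij additive normal_V])

lemma open_apow_image_V: "open (apow \<alpha> k ` V)"
  unfolding apow_image_eq_vimage[OF bij]
  by (rule open_vimage[OF open_V continuous_on_apow[OF continuous continuous_inv]])

lemma closed_apow_image_V: "closed (apow \<alpha> k ` V)"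
  by (rule open_subgroup_closed[OF topological_group open_apow_image_V
        normal_subgroup_is_subgroup[OF normal_apow_image_V]])

lemma normal_Vplus_at: "is_normal_subgroup (Vplus_at \<alpha> V j)"
  unfolding Vplus_at_def by (rule is_normal_subgroup_INT[OF normal_apow_image_V])

lemma normal_Vminus_at: "is_normal_subgroup (Vminus_at \<alpha> V j)"
  unfolding Vminus_at_def by (rule is_normal_subgroup_INT[OF normal_apow_image_V])

definition widened_V :: "nat \<Rightarrow> 'a set" where
  "widened_V n = setprod (Vplus_at \<alpha> V (int n)) (Vminus_at \<alpha> V (- int n))"

lemma V_eq_widened_V_0: "V = widened_V 0"
  using tidy_above by (simp add: widened_V_def Vplus_eq_Vplus_at_0 Vminus_eq_Vminus_at_0)

lemma mono_widened_V: "mono widened_V"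
  unfolding widened_V_def
  by (intro monoI setprod_mono Vplus_at_mono Vminus_at_antimono) simp_all

lemma subgroup_widened_V: "is_subgroup (widened_V n)"
  unfolding widened_V_def
  by (rule is_subgroup_setprod[OF normal_subgroup_is_subgroup[OF normal_Vplus_at] normal_Vminus_at])

lemma open_widened_V: "open (widened_V n)"
  using V_eq_widened_V_0 monoD[OF mono_widened_V, of 0 n]
  by (intro subgroup_open_if_contains_open[OF topological_group open_V
        normal_subgroup_is_subgroup[OF normal_V] subgroup_widened_V]) simp

lemma apow_image_widened_V: "apow \<alpha> t ` widened_V n \<subseteq> widened_V (n + nat \<bar>t\<bar>)"
  unfolding widened_V_def image_setprod[OF apow_additive[OF bij additive]]
    apow_image_Vplus_at[OF bij] apow_image_Vminus_at[OF bij]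
  by (intro setprod_mono Vplus_at_mono Vminus_at_antimono) simp_all

lemma UN_widened_V: "(\<Union>n. widened_V n) = UNIV"
proof (rule top_transitive_invariant_clopen_eq_UNIV[OF transitive bij])
  show "open (\<Union>n. widened_V n)"
    using open_widened_V by blast
  show "closed (\<Union>n. widened_V n)"
    using open_widened_V subgroup_widened_V mono_widened_V
    by (intro open_subgroup_closed[OF topological_group] is_subgroup_UN_mono) blast+
  show "(\<Union>n. widened_V n) \<noteq> {}"
    using subgroup_zero[OF subgroup_widened_V] by blast
  show "apow \<alpha> k x \<in> (\<Union>n. widened_V n)" if "x \<in> (\<Union>n. widened_V n)" for k x
    using that apow_image_widened_V by blast
qed

lemma Vplus_at_setprod_Vminus_at_0_eq_UNIV:
  obtains k :: nat where "setprod (Vplus_at \<alpha> V (int k)) (Vminus_at \<alpha> V 0) = UNIV"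
proof -
  obtain n where "widened_V n = UNIV"
    by (rule compact_UNIV_mono_open_cover[OF compact_UNIV mono_widened_V open_widened_V UN_widened_V])
  then have "apow \<alpha> (int n) ` widened_V n = UNIV"
    using bij_is_surj[OF bij_apow[OF bij, of "int n"]] by (simp del: apow_of_nat)
  then have "setprod (Vplus_at \<alpha> V (int (2 * n))) (Vminus_at \<alpha> V 0) = UNIV"
    unfolding widened_V_def image_setprod[OF apow_additive[OF bij additive]]
      apow_image_Vplus_at[OF bij] apow_image_Vminus_at[OF bij]
    by simp
  then show ?thesis
    by (rule that)
qed

lemma Vplus_at_setprod_Vminus_at_shift:
  assumes "setprod (Vplus_at \<alpha> V (int k)) (Vminus_at \<alpha> V 0) = UNIV"
  shows "setprod (Vplus_at \<alpha> V (t + int k)) (Vminus_at \<alpha> V t) = UNIV"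
proof -
  have "apow \<alpha> t ` setprod (Vplus_at \<alpha> V (int k)) (Vminus_at \<alpha> V 0) = UNIV"
    using assms bij_is_surj[OF bij_apow[OF bij, of t]] by simp
  then show ?thesis
    unfolding image_setprod[OF apow_additive[OF bij additive]]
      apow_image_Vplus_at[OF bij] apow_image_Vminus_at[OF bij]
    by simp
qed

lemma Inter_apow_image_V_subset_open:
  assumes "open W" "0 \<in> W"
  obtains m :: nat where "(\<Inter>i\<in>{- int m..int m}. apow \<alpha> i ` V) \<subseteq> W"
proof -
  have "(\<Inter>i. apow \<alpha> i ` V) \<subseteq> W"
    using Inter_apow_image_V assms(2) by simp
  then obtain I where "finite I" and I: "(\<Inter>i\<in>I. apow \<alpha> i ` V) \<subseteq> W"
    by (rule compact_UNIV_finite_Inter_subset[where C = "\<lambda>i. apow \<alpha> i ` V",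
          OF compact_UNIV closed_apow_image_V assms(1)])
  then obtain b where "abs ` I \<subseteq> {..b}"
    using finite_int_iff_bounded_le by blast
  then have "I \<subseteq> {- int (nat b)..int (nat b)}"
    by force
  then have "(\<Inter>i\<in>{- int (nat b)..int (nat b)}. apow \<alpha> i ` V) \<subseteq> W"
    using I by blast
  then show ?thesis
    by (rule that)
qed

lemma dense_UN_Vplus_at_Int_Vminus_at:
  "closure (\<Union>n::nat. Vplus_at \<alpha> V (int n) \<inter> Vminus_at \<alpha> V (- int n)) = UNIV"
proof -
  let ?D = "\<Union>n::nat. Vplus_at \<alpha> V (int n) \<inter> Vminus_at \<alpha> V (- int n)"
  obtain k where k: "setprod (Vplus_at \<alpha> V (int k)) (Vminus_at \<alpha> V 0) = UNIV"
    by (rule Vplus_at_setprod_Vminus_at_0_eq_UNIV)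
  have meets: "?D \<inter> U \<noteq> {}" if "open U" "g \<in> U" for g U
  proof -
    have "open ((\<lambda>y. g + y) -` U)" "0 \<in> (\<lambda>y. g + y) -` U"
      using open_vimage_left_translation[OF topological_group \<open>open U\<close>] \<open>g \<in> U\<close> by auto
    then obtain m where core: "(\<Inter>i\<in>{- int m..int m}. apow \<alpha> i ` V) \<subseteq> (\<lambda>y. g + y) -` U"
      by (rule Inter_apow_image_V_subset_open)
    define N where "N = (\<Inter>i\<in>{- int m..int m}. apow \<alpha> i ` V)"
    have N: "is_normal_subgroup N"
      unfolding N_def by (rule is_normal_subgroup_INT[OF normal_apow_image_V])
    have "g \<in> setprod (Vplus_at \<alpha> V (int m + int k)) (Vminus_at \<alpha> V (int m))"
      using Vplus_at_setprod_Vminus_at_shift[OF k, of "int m"] by simp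
    then obtain a b where g: "g = a + b" and a: "a \<in> Vplus_at \<alpha> V (int m + int k)"
      and b: "b \<in> Vminus_at \<alpha> V (int m)"
      by (rule setprodE)
    have "a \<in> setprod (Vplus_at \<alpha> V (- int m)) (Vminus_at \<alpha> V (- int (m + k)))"
      using Vplus_at_setprod_Vminus_at_shift[OF k, of "- int (m + k)"] by simp
    then obtain d c where a_eq: "a = d + c" and d: "d \<in> Vplus_at \<alpha> V (- int m)"
      and c: "c \<in> Vminus_at \<alpha> V (- int (m + k))"
      by (rule setprodE)
    have P: "is_subgroup (Vplus_at \<alpha> V (int m + int k))"
      by (rule normal_subgroup_is_subgroup[OF normal_Vplus_at])
    have "d \<in> Vplus_at \<alpha> V (int m + int k)"
      using d Vplus_at_mono[of "- int m" "int m + int k" \<alpha> V] by auto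
    then have "- d + a \<in> Vplus_at \<alpha> V (int m + int k)"
      by (rule subgroup_add[OF P subgroup_uminus[OF P] a])
    moreover have c_eq: "c = - d + a"
      using a_eq by (simp add: add.assoc)
    ultimately have "c \<in> Vplus_at \<alpha> V (int (m + k)) \<inter> Vminus_at \<alpha> V (- int (m + k))"
      using c by simp
    then have "c \<in> ?D"
      by blast
    moreover have "- g + c \<in> N"
    proof -
      have N': "is_subgroup N"
        by (rule normal_subgroup_is_subgroup[OF N])
      have "d \<in> N" "b \<in> N"
        using d b by (auto simp: N_def Vplus_at_def Vminus_at_def)
      then have "- b + (- a + - d - - a) \<in> N"
        by (intro subgroup_add[OF N'] subgroup_uminus[OF N'] normal_subgroup_conj[OF N])
      then show ?thesis
        by (simp add: g c_eq add.assoc minus_add diff_conv_add_uminus del: add_uminus_conv_diff)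
    qed
    then have "g + (- g + c) \<in> U"
      using core unfolding N_def by blast
    then have "c \<in> U"
      by (simp add: add.assoc[symmetric])
    ultimately show ?thesis
      by blast
  qed
  have "g \<in> closure ?D" for g
    unfolding closure_iff_nhds_not_empty
  proof (intro allI impI)
    fix A S assume "S \<subseteq> A" "open S" "g \<in> S"
    then show "?D \<inter> A \<noteq> {}"
      using meets[of S g] by blast
  qed
  then show ?thesis
    by blast
qed

end

theorem proposition5p8:
  fixes \<alpha> :: "'a::{group_add,t2_space} \<Rightarrow> 'a" and V :: "'a set"
  assumes "topological_group TYPE('a)"
    and "compact (UNIV :: 'a set)"
    and "top_automorphism \<alpha>"
    and "top_transitive \<alpha>"
    and "finite_depth \<alpha>"
    and "open V" and "is_normal_subgroup V"
    and "(\<Inter>k. apow \<alpha> k ` V) = {0}"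
    and "V = setprod (Vplus \<alpha> V) (Vminus \<alpha> V)"
  shows "(\<exists>k::nat. setprod ((\<alpha> ^^ k) ` Vplus \<alpha> V) (Vminus \<alpha> V) = UNIV)
       \<and> closure (\<Union>n::nat. (\<alpha> ^^ n) ` Vplus \<alpha> V \<inter> (inv \<alpha> ^^ n) ` Vminus \<alpha> V) = UNIV"
proof -
  interpret tidy_above_subgroup \<alpha> V
    using assms(1-4,6-9) by (rule tidy_above_subgroup.intro)
  obtain k where "setprod (Vplus_at \<alpha> V (int k)) (Vminus_at \<alpha> V 0) = UNIV"
    by (rule Vplus_at_setprod_Vminus_at_0_eq_UNIV)
  then have "setprod ((\<alpha> ^^ k) ` Vplus \<alpha> V) (Vminus \<alpha> V) = UNIV"
    by (simp add: funpow_image_Vplus[OF bij] Vminus_eq_Vminus_at_0)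
  moreover have "closure (\<Union>n::nat. (\<alpha> ^^ n) ` Vplus \<alpha> V \<inter> (inv \<alpha> ^^ n) ` Vminus \<alpha> V) = UNIV"
    using dense_UN_Vplus_at_Int_Vminus_at
    by (simp add: funpow_image_Vplus[OF bij] inv_funpow_image_Vminus[OF bij])
  ultimately show ?thesis
    by blast
qed

end
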